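(* Let $m,n>-1/2$, $\alpha_1,\alpha_2>0$, $0\le|\beta_i|<\alpha_i$ ($i=1,2$), let $X\sim\mathrm{VG}(m,\alpha_1,\beta_1,0)$, $Y\sim\mathrm{VG}(n,\alpha_2,\beta_2,0)$ be independent, $Z=XY$, and let $Q(p)=F_Z^{-1}(p)$, $0<p<1$, be the quantile function of $Z$. Let $\xi_1=\min\{\lambda_1^-\lambda_2^-,\lambda_1^+\lambda_2^+\}$ and $\xi_2=\min\{\lambda_1^-\lambda_2^+,\lambda_1^+\lambda_2^-\}$. Then \[ Q(p)\sim\frac{1}{4\xi_1}(\ln(1-p))^2\ \ (p\to1),\qquad Q(p)\sim-\frac{1}{4\xi_2}(\ln p)^2\ \ (p\to0). \]
   Context: For $\mu>-1/2$, $\alpha>0$ and $0\le|\beta|<\alpha$, $\mathrm{VG}(\mu,\alpha,\beta,0)$ denotes the variance-gamma distribution on $\mathbb{R}$ with probability density function $f(x)=\frac{(\alpha^2-\beta^2)^{\mu+1/2}}{\sqrt{\pi}(2\alpha)^{\mu}\Gamma(\mu+1/2)}e^{\beta x}|x|^{\mu}K_{\mu}(\alpha|x|)$, where $K_\nu$ is the modified Bessel function of the second kind. Notation: $\lambda_i^{\pm}=\alpha_i\pm\beta_i$; $F_Z(z)=\mathbb{P}(Z\le z)$ (continuous and strictly increasing, so $F_Z^{-1}$ is its inverse). $a\sim b$ means $a/b\to1$. *)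

theory Defs
  imports "HOL-Probability.Probability" "HOL-Library.Landau_Symbols"
begin

definition bessel_K :: "real \<Rightarrow> real \<Rightarrow> real" where
  "bessel_K \<nu> x = (LBINT t:{0<..}. exp (- x * cosh t) * cosh (\<nu> * t))"

definition vg_pdf :: "real \<Rightarrow> real \<Rightarrow> real \<Rightarrow> real \<Rightarrow> real" where
  "vg_pdf \<mu> \<alpha> \<beta> x =
     (\<alpha>\<^sup>2 - \<beta>\<^sup>2) powr (\<mu> + 1/2) / (sqrt pi * (2 * \<alpha>) powr \<mu> * Gamma (\<mu> + 1/2))
     * exp (\<beta> * x) * \<bar>x\<bar> powr \<mu> * bessel_K \<mu> (\<alpha> * \<bar>x\<bar>)"

text \<open>Quantile function: inverse of a (continuous, strictly increasing) CDF.\<close>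
definition quantile :: "(real \<Rightarrow> real) \<Rightarrow> real \<Rightarrow> real" where
  "quantile F p = (THE z. F z = p)"

end

theory Submission
  imports Defs "HOL-Real_Asymp.Real_Asymp"
begin

(*
  From the Bessel-function form of the density, a variance-gamma variable has exponential tails:
  P(X > x) = exp (- (alpha1 - beta1 + o(1)) x) and P(- X > x) = exp (- (alpha1 + beta1 + o(1)) x).
  For independent U, V whose right tails have rates l1 and l2, the product has the tail
  P(U V > z) = exp (- (2 sqrt (l1 l2) + o(1)) sqrt z): the lower bound comes from the event
  {U > u, V > v} with u v = z and l1 u = l2 v, the upper bound from Markov's inequality for
  exp (a1 U + a2 V) and a1 x + a2 y >= 2 sqrt (a1 a2 x y).  A product above z > 0 has factors of
  equal sign, so both sign patterns compete and P(X Y > z) = exp (- (2 sqrt xi1 + o(1)) sqrt z).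
  Inverting this gives the quantile as p -> 1.  The lower tail of X Y is the upper tail of X (- Y),
  and - Y is variance-gamma with beta2 replaced by - beta2, which turns xi1 into xi2.
*)

section \<open>Bounds for the Bessel function\<close>

lemma cosh_le_exp_abs: "cosh (x::real) \<le> exp \<bar>x\<bar>"
  by (cases "x \<ge> 0") (simp_all add: cosh_def)

lemma sq_div_4_le_cosh:
  assumes "(t::real) \<ge> 0"
  shows "t\<^sup>2 / 4 \<le> cosh t"
proof -
  have "1 + t + t\<^sup>2 / 2 \<le> exp t"
    using exp_lower_Taylor_quadratic[OF assms] by (simp add: power2_eq_square)
  moreover have "2 * cosh t = exp t + exp (- t)" by (simp add: cosh_def)
  moreover have "exp (- t) > 0" by simp
  ultimately show ?thesis using assms by linarith
qed

lemma bessel_K_integrand_bound: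
  fixes y \<nu> t T :: real
  assumes y: "y > 0" and t: "t \<ge> 0" and T: "T = 4 * (\<bar>\<nu>\<bar> + 1) / y"
  shows "exp (- y * cosh t) * cosh (\<nu> * t) \<le> exp (\<bar>\<nu>\<bar> * T) * indicator {..T} t + exp (- t)"
proof -
  have "exp (- y * cosh t) * cosh (\<nu> * t) \<le> exp (- y * cosh t) * exp (\<bar>\<nu>\<bar> * t)"
    using cosh_le_exp_abs[of "\<nu> * t"] t by (simp add: abs_mult)
  also have "\<dots> = exp (\<bar>\<nu>\<bar> * t - y * cosh t)" by (simp add: exp_add[symmetric])
  finally have bound: "exp (- y * cosh t) * cosh (\<nu> * t) \<le> exp (\<bar>\<nu>\<bar> * t - y * cosh t)" .
  show ?thesis
  proof (cases "t \<le> T")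
    case True
    have "0 \<le> y * cosh t" using y by simp
    hence "exp (\<bar>\<nu>\<bar> * t - y * cosh t) \<le> exp (\<bar>\<nu>\<bar> * T)"
      using mult_left_mono[OF True, of "\<bar>\<nu>\<bar>"] by simp
    moreover have "exp (- t) > 0" by simp
    moreover have "indicator {..T} t = (1::real)" using True by simp
    ultimately show ?thesis using bound by (metis add_increasing2 less_imp_le mult_1_right order_trans)
  next
    case False
    have "4 * (\<bar>\<nu>\<bar> + 1) < t * y" using False y by (simp add: T not_le pos_divide_less_eq)
    hence "(\<bar>\<nu>\<bar> + 1) * t \<le> (y * t / 4) * t" using t by (intro mult_right_mono) (auto simp: mult.commute)
    also have "\<dots> \<le> y * cosh t"
      using sq_div_4_le_cosh[OF t] y by (simp add: power2_eq_square field_simps)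
    finally have "exp (\<bar>\<nu>\<bar> * t - y * cosh t) \<le> exp (- t)" by (simp add: algebra_simps)
    with order_trans[OF bound this] False show ?thesis by simp
  qed
qed

lemma bessel_K_integrable:
  fixes y \<nu> :: real
  assumes y: "y > 0"
  shows "set_integrable lborel {0<..} (\<lambda>t. exp (- y * cosh t) * cosh (\<nu> * t))"
proof -
  define T where "T = 4 * (\<bar>\<nu>\<bar> + 1) / y"
  define A where "A = exp (\<bar>\<nu>\<bar> * T)"
  have "T \<ge> 0" using y by (simp add: T_def)
  have pt: "ennreal (norm (indicator {0<..} t *\<^sub>R (exp (- y * cosh t) * cosh (\<nu> * t))))
       \<le> ennreal A * indicator {0..T} t + ennreal (exp (- t)) * indicator {0..} t" for t
  proof (cases "t > 0")
    case True
    have "ennreal (exp (- y * cosh t) * cosh (\<nu> * t)) \<le> ennreal (A * indicator {..T} t + exp (- t))"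
      using bessel_K_integrand_bound[OF y _ T_def, of t] True by (intro ennreal_leI) (simp add: A_def)
    also have "\<dots> = ennreal A * indicator {0..T} t + ennreal (exp (- t)) * indicator {0..} t"
      using True by (cases "t \<le> T") (simp_all add: indicator_def A_def ennreal_plus)
    finally show ?thesis using True by simp
  qed (simp add: indicator_def)
  have "(\<integral>\<^sup>+ t. ennreal (norm (indicator {0<..} t *\<^sub>R (exp (- y * cosh t) * cosh (\<nu> * t)))) \<partial>lborel)
      \<le> (\<integral>\<^sup>+ t. ennreal A * indicator {0..T} t + ennreal (exp (- t)) * indicator {0..} t \<partial>lborel)"
    by (intro nn_integral_mono pt)
  also have "\<dots> = ennreal A * T + 1"
    using \<open>T \<ge> 0\<close> nn_intergal_power_times_exp_Ici[of 0]
    by (simp add: nn_integral_add nn_integral_cmult_indicator)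
  also have "\<dots> < \<infinity>" by (simp add: ennreal_mult_less_top)
  finally show ?thesis
    unfolding set_integrable_def
    by (intro integrableI_bounded borel_measurable_scaleR borel_measurable_indicator)
       (auto intro!: borel_measurable_continuous_onI continuous_intros)
qed

lemma bessel_K_le_exp:
  fixes \<nu> y :: real
  assumes y: "y \<ge> 1"
  shows "bessel_K \<nu> y \<le> exp (1 - y) * bessel_K \<nu> 1"
proof -
  have "bessel_K \<nu> y \<le> (LBINT t:{0<..}. exp (1 - y) * (exp (- 1 * cosh t) * cosh (\<nu> * t)))"
    unfolding bessel_K_def
  proof (intro set_integral_mono bessel_K_integrable set_integrable_mult_right)
    fix t :: real
    have "0 \<le> (y - 1) * (cosh t - 1)" using y cosh_real_ge_1[of t] by simp
    hence "exp (- y * cosh t) \<le> exp (1 - y) * exp (- 1 * cosh t)"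
      by (simp add: exp_add[symmetric] algebra_simps)
    thus "exp (- y * cosh t) * cosh (\<nu> * t) \<le> exp (1 - y) * (exp (- 1 * cosh t) * cosh (\<nu> * t))"
      by (simp add: mult.assoc[symmetric] mult_right_mono)
  qed (use y in auto)
  also have "\<dots> = exp (1 - y) * bessel_K \<nu> 1" unfolding bessel_K_def by simp
  finally show ?thesis .
qed

lemma bessel_K_ge:
  fixes \<nu> y c :: real
  assumes y: "y > 0" and c: "c > 0"
  shows "c * exp (- y * cosh c) \<le> bessel_K \<nu> y"
proof -
  define k where "k = exp (- y * cosh c)"
  have box: "indicator {0<..} t *\<^sub>R (k * indicator {..c} t) = indicator {0<..c} t *\<^sub>R k" for t :: real
    by (auto simp: indicator_def)
  have "c * k = (LBINT t:{0<..}. k * indicator {..c} t)"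
    unfolding set_lebesgue_integral_def box using c by (simp add: measure_def)
  also have "\<dots> \<le> bessel_K \<nu> y"
    unfolding bessel_K_def
  proof (rule set_integral_mono[OF _ bessel_K_integrable[OF y]])
    show "set_integrable lborel {0<..} (\<lambda>t. k * indicator {..c} t)"
      unfolding set_integrable_def box using c by (intro integrable_scaleR_left integrable_real_indicator) auto
    fix t :: real assume t: "t \<in> {0<..}"
    show "k * indicator {..c} t \<le> exp (- y * cosh t) * cosh (\<nu> * t)"
    proof (cases "t \<le> c")
      case True
      have "k \<le> exp (- y * cosh t)"
        using True t y by (simp add: k_def cosh_real_nonneg_le_iff)
      hence "k * 1 \<le> exp (- y * cosh t) * cosh (\<nu> * t)"
        using cosh_real_ge_1[of "\<nu> * t"] by (intro mult_mono) auto
      with True show ?thesis by simp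
    qed (simp add: k_def)
  qed
  finally show ?thesis by (simp add: k_def)
qed

lemma bessel_K_pos: "y > 0 \<Longrightarrow> bessel_K \<nu> y > 0"
  using bessel_K_ge[of y 1 \<nu>] exp_gt_zero[of "- y * cosh 1"] by linarith

section \<open>The variance-gamma density\<close>

definition vg_const :: "real \<Rightarrow> real \<Rightarrow> real \<Rightarrow> real" where
  "vg_const \<mu> \<alpha> \<beta> = (\<alpha>\<^sup>2 - \<beta>\<^sup>2) powr (\<mu> + 1/2) / (sqrt pi * (2 * \<alpha>) powr \<mu> * Gamma (\<mu> + 1/2))"

lemma vg_const_pos:
  assumes "\<mu> > -1/2" "\<alpha> > 0" "\<bar>\<beta>\<bar> < \<alpha>"
  shows "vg_const \<mu> \<alpha> \<beta> > 0"
proof -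
  have "\<bar>\<beta>\<bar>\<^sup>2 < \<alpha>\<^sup>2" using assms by (intro power_strict_mono) auto
  moreover have "Gamma (\<mu> + 1/2) > 0" using assms by (intro Gamma_real_pos) simp
  ultimately show ?thesis using assms by (simp add: vg_const_def)
qed

lemma vg_pdf_eq:
  "vg_pdf \<mu> \<alpha> \<beta> x = vg_const \<mu> \<alpha> \<beta> * exp (\<beta> * x) * \<bar>x\<bar> powr \<mu> * bessel_K \<mu> (\<alpha> * \<bar>x\<bar>)"
  unfolding vg_pdf_def vg_const_def by simp

lemma vg_pdf_minus: "vg_pdf \<mu> \<alpha> \<beta> (- x) = vg_pdf \<mu> \<alpha> (- \<beta>) x"
  unfolding vg_pdf_def by simp

lemma vg_pdf_pos:
  assumes "\<mu> > -1/2" "\<alpha> > 0" "\<bar>\<beta>\<bar> < \<alpha>" "x \<noteq> 0"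
  shows "vg_pdf \<mu> \<alpha> \<beta> x > 0"
  using vg_const_pos[OF assms(1-3)] bessel_K_pos[of "\<alpha> * \<bar>x\<bar>" \<mu>] assms(2,4)
  by (simp add: vg_pdf_eq)

lemma vg_pdf_nonneg:
  assumes "\<mu> > -1/2" "\<alpha> > 0" "\<bar>\<beta>\<bar> < \<alpha>"
  shows "vg_pdf \<mu> \<alpha> \<beta> x \<ge> 0"
  using vg_pdf_pos[OF assms, of x] by (cases "x = 0") (auto simp: vg_pdf_def)

lemma vg_pdf_le_exp:
  assumes p: "\<mu> > -1/2" "\<alpha> > 0" "\<bar>\<beta>\<bar> < \<alpha>" and b: "b < \<alpha> - \<beta>"
  shows "\<exists>D. \<forall>\<^sub>F x in at_top. vg_pdf \<mu> \<alpha> \<beta> x \<le> D * exp (- b * x)"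
proof -
  define \<delta> where "\<delta> = \<alpha> - \<beta> - b"
  define D where "D = vg_const \<mu> \<alpha> \<beta> * exp 1 * bessel_K \<mu> 1"
  have "\<delta> > 0" using b by (simp add: \<delta>_def)
  hence "\<forall>\<^sub>F x in at_top. x powr \<mu> \<le> exp (\<delta> * x)" by real_asymp
  moreover have "\<forall>\<^sub>F x in at_top. 1 \<le> \<alpha> * x" using p(2) by real_asymp
  ultimately have "\<forall>\<^sub>F x in at_top. vg_pdf \<mu> \<alpha> \<beta> x \<le> D * exp (- b * x)"
  proof eventually_elim
    case (elim x)
    have "0 < \<alpha> * x" using elim(2) by linarith
    hence x: "x > 0" using p(2) by (simp add: zero_less_mult_iff)
    have "vg_pdf \<mu> \<alpha> \<beta> x \<le> vg_const \<mu> \<alpha> \<beta> * exp (\<beta> * x) * x powr \<mu> * (exp (1 - \<alpha> * x) * bessel_K \<mu> 1)"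
      unfolding vg_pdf_eq abs_of_pos[OF x] using vg_const_pos[OF p] elim(2)
      by (intro mult_left_mono bessel_K_le_exp) auto
    also have "\<dots> = D * x powr \<mu> * exp (- (\<alpha> - \<beta>) * x)"
      by (simp add: D_def exp_add[symmetric] algebra_simps)
    also have "\<dots> \<le> D * exp (\<delta> * x) * exp (- (\<alpha> - \<beta>) * x)"
      using elim(1) vg_const_pos[OF p] bessel_K_pos[of 1 \<mu>] by (simp add: D_def)
    also have "\<dots> = D * exp (- b * x)"
      by (simp add: \<delta>_def exp_add[symmetric] algebra_simps)
    finally show ?case .
  qed
  thus ?thesis by blast
qed

lemma vg_pdf_ge_exp:
  assumes p: "\<mu> > -1/2" "\<alpha> > 0" "\<bar>\<beta>\<bar> < \<alpha>" and b: "b > \<alpha> - \<beta>"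
  shows "\<exists>A>0. \<forall>\<^sub>F x in at_top. A * exp (- b * x) \<le> vg_pdf \<mu> \<alpha> \<beta> x"
proof -
  have "((\<lambda>c. \<alpha> * cosh c - \<beta>) \<longlongrightarrow> \<alpha> * cosh 0 - \<beta>) (at_right 0)"
    by (intro tendsto_intros)
  hence "\<forall>\<^sub>F c in at_right 0. \<alpha> * cosh c - \<beta> < b" using b by (intro order_tendstoD) auto
  \<comment> \<open>the bound K(y) \<ge> c exp (- y cosh c) costs only the factor cosh c in the decay rate\<close>
  then obtain c where c: "c > 0" "\<alpha> * cosh c - \<beta> < b"
    using eventually_happens'[OF trivial_limit_at_right_real eventually_conj[OF eventually_at_right_less]]
    by blast
  define \<delta> where "\<delta> = b - (\<alpha> * cosh c - \<beta>)"
  define A where "A = vg_const \<mu> \<alpha> \<beta> * c"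
  have "\<delta> > 0" using c by (simp add: \<delta>_def)
  hence "\<forall>\<^sub>F x in at_top. exp (- \<delta> * x) \<le> x powr \<mu>" by real_asymp
  moreover have "\<forall>\<^sub>F x in at_top. x > (0::real)" by real_asymp
  ultimately have "\<forall>\<^sub>F x in at_top. A * exp (- b * x) \<le> vg_pdf \<mu> \<alpha> \<beta> x"
  proof eventually_elim
    case (elim x)
    have "A * exp (- b * x) = A * exp (- \<delta> * x) * exp (- (\<alpha> * cosh c - \<beta>) * x)"
      by (simp add: \<delta>_def exp_add[symmetric] algebra_simps)
    also have "\<dots> \<le> A * x powr \<mu> * exp (- (\<alpha> * cosh c - \<beta>) * x)"
      using elim(1) vg_const_pos[OF p] c by (simp add: A_def)
    also have "\<dots> = vg_const \<mu> \<alpha> \<beta> * exp (\<beta> * x) * x powr \<mu> * (c * exp (- (\<alpha> * x) * cosh c))"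
      by (simp add: A_def exp_add[symmetric] algebra_simps)
    also have "\<dots> \<le> vg_pdf \<mu> \<alpha> \<beta> x"
      unfolding vg_pdf_eq abs_of_pos[OF elim(2)] using vg_const_pos[OF p] elim(2) p c
      by (intro mult_left_mono bessel_K_ge) auto
    finally show ?case .
  qed
  moreover have "A > 0" using vg_const_pos[OF p] c by (simp add: A_def)
  ultimately show ?thesis by blast
qed

section \<open>Exponential right tails\<close>

text \<open>\<open>exp_right_tail M U l\<close> says P(U > x) = exp (- (l + o(1)) x); the upper bound is phrased
  through exponential moments of the positive part, the form that multiplies under independence.\<close>

definition exp_right_tail :: "'a measure \<Rightarrow> ('a \<Rightarrow> real) \<Rightarrow> real \<Rightarrow> bool" where
  "exp_right_tail M U l \<longleftrightarrow> l > 0 \<and>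
     (\<forall>a. 0 < a \<and> a < l \<longrightarrow> (\<integral>\<^sup>+\<omega>. ennreal (exp (a * max (U \<omega>) 0)) \<partial>M) \<noteq> \<infinity>) \<and>
     (\<forall>a>l. \<forall>\<^sub>F x in at_top. exp (- a * x) \<le> measure M {\<omega> \<in> space M. x < U \<omega>})"

lemma nn_integral_exp_neg_atLeast:
  fixes c R :: real
  assumes c: "c > 0"
  shows "(\<integral>\<^sup>+x. ennreal (exp (- c * x)) * indicator {R..} x \<partial>lborel) = ennreal (exp (- c * R) / c)"
proof -
  have "(\<integral>\<^sup>+x. ennreal (exp (- c * x)) * indicator {R..} x \<partial>lborel) = 0 - (- exp (- c * R) / c)"
  proof (rule nn_integral_FTC_atLeast)
    fix x :: real
    show "DERIV (\<lambda>x. - exp (- c * x) / c) x :> exp (- c * x)"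
      using c by (auto intro!: derivative_eq_intros)
    show "((\<lambda>x. - exp (- c * x) / c) \<longlongrightarrow> 0) at_top" using c by real_asymp
  qed auto
  then show ?thesis by simp
qed

context prob_space
begin

lemma nn_integral_exp_pos_part_finite:
  fixes X :: "'a \<Rightarrow> real"
  assumes D: "distributed M lborel X (\<lambda>x. ennreal (f x))" and f: "\<And>x. f x \<ge> 0"
    and bound: "\<forall>\<^sub>F x in at_top. f x \<le> K * exp (- b * x)" and a: "0 < a" "a < b"
  shows "(\<integral>\<^sup>+\<omega>. ennreal (exp (a * max (X \<omega>) 0)) \<partial>M) \<noteq> \<infinity>"
proof -
  obtain R0 where R0: "\<And>x. x \<ge> R0 \<Longrightarrow> f x \<le> K * exp (- b * x)"
    using bound by (auto simp: eventually_at_top_linorder)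
  define R where "R = max R0 0"
  have pt: "f x * exp (a * max x 0)
      \<le> exp (a * R) * f x + \<bar>K\<bar> * (exp (- (b - a) * x) * indicator {R..} x)" for x
  proof (cases "x < R")
    case True
    hence "exp (a * max x 0) \<le> exp (a * R)" using a by (simp add: R_def)
    hence "f x * exp (a * max x 0) \<le> exp (a * R) * f x"
      using f[of x] by (simp add: mult.commute mult_left_mono)
    moreover have "0 \<le> \<bar>K\<bar> * (exp (- (b - a) * x) * indicator {R..} x)" by simp
    ultimately show ?thesis by linarith
  next
    case False
    hence "x \<ge> R0" "x \<ge> 0" by (auto simp: R_def)
    hence "f x * exp (a * max x 0) \<le> K * exp (- b * x) * exp (a * x)"
      using R0[of x] by (simp add: mult_right_mono)
    also have "\<dots> \<le> \<bar>K\<bar> * exp (- (b - a) * x)" by (simp add: exp_add[symmetric] algebra_simps)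
    moreover have "0 \<le> exp (a * R) * f x" using f[of x] by simp
    ultimately show ?thesis using False by (simp add: add_increasing)
  qed
  have "(\<integral>\<^sup>+\<omega>. ennreal (exp (a * max (X \<omega>) 0)) \<partial>M) = (\<integral>\<^sup>+x. ennreal (f x * exp (a * max x 0)) \<partial>lborel)"
    using distributed_nn_integral[OF D, of "\<lambda>x. ennreal (exp (a * max x 0))"] f
    by (simp add: ennreal_mult)
  also have "\<dots> \<le> (\<integral>\<^sup>+x. ennreal (exp (a * R)) * ennreal (f x)
                    + ennreal \<bar>K\<bar> * (ennreal (exp (- (b - a) * x)) * indicator {R..} x) \<partial>lborel)"
  proof (rule nn_integral_mono)
    fix x
    show "ennreal (f x * exp (a * max x 0)) \<le> ennreal (exp (a * R)) * ennreal (f x)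
        + ennreal \<bar>K\<bar> * (ennreal (exp (- (b - a) * x)) * indicator {R..} x)"
      using ennreal_leI[OF pt[of x]] f[of x] by (cases "R \<le> x") (simp_all add: ennreal_plus ennreal_mult)
  qed
  also have "\<dots> = ennreal (exp (a * R)) * (\<integral>\<^sup>+x. ennreal (f x) \<partial>lborel)
      + ennreal \<bar>K\<bar> * (\<integral>\<^sup>+x. ennreal (exp (- (b - a) * x)) * indicator {R..} x \<partial>lborel)"
    using distributed_borel_measurable[OF D] by (simp add: nn_integral_add nn_integral_cmult)
  also have "(\<integral>\<^sup>+x. ennreal (exp (- (b - a) * x)) * indicator {R..} x \<partial>lborel)
      = ennreal (exp (- (b - a) * R) / (b - a))"
    using a by (intro nn_integral_exp_neg_atLeast) simp
  also have "(\<integral>\<^sup>+x. ennreal (f x) \<partial>lborel) = 1"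
    using distributed_nn_integral[OF D, of "\<lambda>_. 1"] by (simp add: emeasure_space_1)
  finally show ?thesis by (auto simp: top_unique ennreal_mult_eq_top_iff)
qed

lemma prob_gt_ge_exp_of_density_ge:
  fixes X :: "'a \<Rightarrow> real"
  assumes D: "distributed M lborel X (\<lambda>x. ennreal (f x))"
    and bound: "\<forall>\<^sub>F x in at_top. A * exp (- b * x) \<le> f x" and A: "A > 0" and b: "0 \<le> b" "b < a"
  shows "\<forall>\<^sub>F x in at_top. exp (- a * x) \<le> prob {\<omega> \<in> space M. x < X \<omega>}"
proof -
  obtain R where R: "\<And>t. t \<ge> R \<Longrightarrow> A * exp (- b * t) \<le> f t"
    using bound by (auto simp: eventually_at_top_linorder)
  have "\<forall>\<^sub>F x in at_top. A * exp (- b * (x + 1)) \<le> prob {\<omega> \<in> space M. x < X \<omega>}"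
  proof (rule eventually_at_top_linorderI)
    fix x assume x: "x \<ge> R"
    \<comment> \<open>as b \<ge> 0, the density is at least A exp (- b (x + 1)) on (x, x + 1]\<close>
    have "ennreal (A * exp (- b * (x + 1)))
        = (\<integral>\<^sup>+t. ennreal (A * exp (- b * (x + 1))) * indicator {x<..x+1} t \<partial>lborel)"
      by (simp add: nn_integral_cmult_indicator)
    also have "\<dots> \<le> (\<integral>\<^sup>+t. ennreal (f t) * indicator {x<..} t \<partial>lborel)"
    proof (intro nn_integral_mono)
      fix t
      show "ennreal (A * exp (- b * (x + 1))) * indicator {x<..x+1} t \<le> ennreal (f t) * indicator {x<..} t"
      proof (cases "x < t \<and> t \<le> x + 1")
        case True
        have "A * exp (- b * (x + 1)) \<le> A * exp (- b * t)"
          using True A b by (simp add: mult_left_mono)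
        also have "\<dots> \<le> f t" using R[of t] True x by simp
        finally show ?thesis using True by (simp add: indicator_def ennreal_leI)
      qed (auto simp: indicator_def)
    qed
    also have "\<dots> = ennreal (prob {\<omega> \<in> space M. x < X \<omega>})"
      using distributed_emeasure[OF D, of "{x<..}"] by (simp add: emeasure_eq_measure vimage_def Int_def conj_commute)
    finally show "A * exp (- b * (x + 1)) \<le> prob {\<omega> \<in> space M. x < X \<omega>}"
      by (simp add: ennreal_le_iff)
  qed
  moreover have "\<forall>\<^sub>F x in at_top. exp (- (a - b) * x) < A * exp (- b)"
  proof (rule order_tendstoD(2))
    show "((\<lambda>x. exp (- (a - b) * x)) \<longlongrightarrow> 0) at_top" using b by real_asymp
  qed (use A in simp)
  ultimately show ?thesis
  proof eventually_elim
    case (elim x)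
    have "exp (- a * x) = exp (- (a - b) * x) * exp (- b * x)" by (simp add: exp_add[symmetric] algebra_simps)
    also have "\<dots> \<le> A * exp (- b) * exp (- b * x)" using elim(2) by simp
    also have "\<dots> = A * exp (- b * (x + 1))" by (simp add: exp_add[symmetric] algebra_simps)
    finally show ?case using elim(1) by linarith
  qed
qed

lemma prob_interval_pos_of_density_pos:
  fixes X :: "'a \<Rightarrow> real"
  assumes D: "distributed M lborel X (\<lambda>x. ennreal (f x))"
    and pos: "\<And>x. a < x \<Longrightarrow> x < b \<Longrightarrow> f x > 0" and "a < b"
  shows "0 < prob {\<omega> \<in> space M. a < X \<omega> \<and> X \<omega> < b}"
proof -
  have "{\<omega> \<in> space M. a < X \<omega> \<and> X \<omega> < b} = X -` {a<..<b} \<inter> space M" by auto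
  also have "emeasure M \<dots> = (\<integral>\<^sup>+t. ennreal (f t) * indicator {a<..<b} t \<partial>lborel)"
    by (rule distributed_emeasure[OF D]) simp
  also have "\<dots> \<noteq> 0"
  proof
    assume "(\<integral>\<^sup>+t. ennreal (f t) * indicator {a<..<b} t \<partial>lborel) = 0"
    hence "AE t in lborel. ennreal (f t) * indicator {a<..<b} t = 0"
      using distributed_borel_measurable[OF D] by (subst (asm) nn_integral_0_iff_AE) auto
    hence "AE t in lborel. t \<notin> {a<..<b}"
      by eventually_elim (use pos in \<open>force simp: indicator_def\<close>)
    hence "emeasure lborel {a<..<b} = 0" by (subst (asm) AE_iff_measurable) auto
    thus False using \<open>a < b\<close> by simp
  qed
  finally show ?thesis by (simp add: emeasure_eq_measure zero_less_measure_iff)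
qed

lemma vg_exp_right_tail:
  fixes X :: "'a \<Rightarrow> real"
  assumes D: "distributed M lborel X (\<lambda>x. ennreal (vg_pdf \<mu> \<alpha> \<beta> x))"
    and p: "\<mu> > -1/2" "\<alpha> > 0" "\<bar>\<beta>\<bar> < \<alpha>"
  shows "exp_right_tail M X (\<alpha> - \<beta>)"
  unfolding exp_right_tail_def
proof (intro conjI allI impI)
  show "\<alpha> - \<beta> > 0" using p by simp
next
  fix a assume a: "0 < a \<and> a < \<alpha> - \<beta>"
  then obtain b where b: "a < b" "b < \<alpha> - \<beta>" using dense by blast
  obtain K where "\<forall>\<^sub>F x in at_top. vg_pdf \<mu> \<alpha> \<beta> x \<le> K * exp (- b * x)"
    using vg_pdf_le_exp[OF p b(2)] by blast
  with a b vg_pdf_nonneg[OF p] show "(\<integral>\<^sup>+\<omega>. ennreal (exp (a * max (X \<omega>) 0)) \<partial>M) \<noteq> \<infinity>"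
    by (intro nn_integral_exp_pos_part_finite[OF D]) auto
next
  fix a assume a: "a > \<alpha> - \<beta>"
  then obtain b where b: "\<alpha> - \<beta> < b" "b < a" using dense by blast
  obtain A where "A > 0" "\<forall>\<^sub>F x in at_top. A * exp (- b * x) \<le> vg_pdf \<mu> \<alpha> \<beta> x"
    using vg_pdf_ge_exp[OF p b(1)] by blast
  with b p show "\<forall>\<^sub>F x in at_top. exp (- a * x) \<le> prob {\<omega> \<in> space M. x < X \<omega>}"
    by (intro prob_gt_ge_exp_of_density_ge[OF D, where A = A and b = b]) auto
qed

lemma vg_prob_interval_pos:
  fixes X :: "'a \<Rightarrow> real"
  assumes D: "distributed M lborel X (\<lambda>x. ennreal (vg_pdf \<mu> \<alpha> \<beta> x))"
    and p: "\<mu> > -1/2" "\<alpha> > 0" "\<bar>\<beta>\<bar> < \<alpha>" and "0 < a" "a < b"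
  shows "0 < prob {\<omega> \<in> space M. a < X \<omega> \<and> X \<omega> < b}"
  using assms by (intro prob_interval_pos_of_density_pos[OF D] vg_pdf_pos[OF p]) auto

lemma distributed_vg_uminus:
  assumes "distributed M lborel X (\<lambda>x. ennreal (vg_pdf \<mu> \<alpha> \<beta> x))"
  shows "distributed M lborel (\<lambda>\<omega>. - X \<omega>) (\<lambda>x. ennreal (vg_pdf \<mu> \<alpha> (- \<beta>) x))"
  using distributed_affine[OF assms, of "-1" 0] by (simp add: vg_pdf_minus[symmetric] divide_ennreal_def)

end

section \<open>Tails of products of independent variables\<close>

lemma hyperbola_null_sets:
  "{p :: real \<times> real. fst p * snd p = z} \<in> null_sets (lborel \<Otimes>\<^sub>M lborel)"
proof -
  define S where "S = {p :: real \<times> real. fst p * snd p = z}"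
  have S: "S \<in> sets (lborel \<Otimes>\<^sub>M lborel)"
  proof -
    have "(\<lambda>p::real \<times> real. fst p * snd p) \<in> borel_measurable (borel \<Otimes>\<^sub>M borel)" by measurable
    from measurable_sets[OF this, of "{z}"] show ?thesis
      by (simp add: S_def space_pair_measure vimage_def)
  qed
  have "emeasure (lborel \<Otimes>\<^sub>M lborel) S = (\<integral>\<^sup>+x. emeasure lborel (Pair x -` S) \<partial>lborel)"
    by (rule lborel.emeasure_pair_measure_alt[OF S])
  also have "\<dots> = 0"
  proof (rule nn_integral_zero')
    show "AE x in lborel. emeasure lborel (Pair x -` S) = 0"
      using AE_lborel_singleton[of 0]
    proof eventually_elim
      case (elim x)
      hence "Pair x -` S = {z / x}" by (auto simp: S_def field_simps)
      thus ?case by simp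
    qed
  qed
  finally show ?thesis using S by (simp add: S_def null_sets_def)
qed

lemma sqrt_mult_le_weighted_sum:
  fixes a1 a2 x y :: real
  assumes "0 \<le> a1" "0 \<le> a2" "0 \<le> x" "0 \<le> y"
  shows "2 * sqrt (a1 * a2) * sqrt (x * y) \<le> a1 * x + a2 * y"
  using arith_geo_mean_sqrt[of "a1 * x" "a2 * y"] assms by (simp add: real_sqrt_mult mult_ac)

lemma two_sqrt_mult_rescaled:
  fixes l1 l2 s :: real
  assumes "0 < l1" "0 < l2" "0 \<le> s"
  defines "t \<equiv> s / (2 * sqrt (l1 * l2))"
  shows "2 * sqrt ((l1 * t) * (l2 * t)) = s"
proof -
  have "(l1 * t) * (l2 * t) = (l1 * l2) * t\<^sup>2" by (simp add: power2_eq_square mult_ac)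
  moreover have "t \<ge> 0" using assms by (simp add: t_def)
  ultimately show ?thesis using assms by (simp add: real_sqrt_mult t_def)
qed

lemma tendsto_ln_div_of_exp_bounds:
  fixes G h :: "'b \<Rightarrow> real"
  assumes h: "filterlim h at_top F" and r: "r > 0"
    and lower: "\<And>s. s > r \<Longrightarrow> \<forall>\<^sub>F x in F. exp (- s * h x) \<le> G x"
    and upper: "\<And>s. 0 < s \<Longrightarrow> s < r \<Longrightarrow> \<exists>C. \<forall>\<^sub>F x in F. G x \<le> C * exp (- s * h x)"
  shows "((\<lambda>x. ln (G x) / h x) \<longlongrightarrow> - r) F"
proof -
  have h_pos: "\<forall>\<^sub>F x in F. h x > 0" using h by (simp add: filterlim_at_top_dense)
  show ?thesis
  proof (rule order_tendstoI)
    fix a assume "a < - r"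
    then obtain s where s: "r < s" "s < - a" using dense[of r "- a"] by auto
    from lower[OF s(1)] h_pos show "\<forall>\<^sub>F x in F. a < ln (G x) / h x"
    proof eventually_elim
      case (elim x)
      hence "- s * h x \<le> ln (G x)" by (subst ln_ge_iff) (auto intro: less_le_trans[OF exp_gt_zero])
      hence "- s \<le> ln (G x) / h x" using elim(2) by (simp add: pos_le_divide_eq)
      thus ?case using s by linarith
    qed
  next
    fix a assume "- r < a"
    then obtain s where s: "0 < s" "s < r" "- a < s" using dense[of "max 0 (- a)" r] r by auto
    obtain C where C: "\<forall>\<^sub>F x in F. G x \<le> C * exp (- s * h x)" using upper[OF s(1,2)] by blast
    have "((\<lambda>x. ln C / h x) \<longlongrightarrow> 0) F"
      by (rule tendsto_divide_0[OF tendsto_const filterlim_at_top_imp_at_infinity[OF h]])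
    hence "\<forall>\<^sub>F x in F. ln C / h x < a + s" using s by (intro order_tendstoD) auto
    moreover note C
    moreover have "\<forall>\<^sub>F x in F. exp (- (r + 1) * h x) \<le> G x" using lower[of "r + 1"] by simp
    moreover note h_pos
    ultimately show "\<forall>\<^sub>F x in F. ln (G x) / h x < a"
    proof eventually_elim
      case (elim x)
      have G: "0 < G x" using elim(3) by (rule less_le_trans[OF exp_gt_zero])
      hence "0 < C * exp (- s * h x)" using elim(2) by linarith
      hence "ln (G x) \<le> ln (C * exp (- s * h x))" using G elim(2) by simp
      also have "\<dots> = ln C - s * h x"
        using \<open>0 < C * exp (- s * h x)\<close> by (simp add: ln_mult zero_less_mult_iff)
      finally have "ln (G x) / h x \<le> ln C / h x - s" using elim(4) by (simp add: divide_simps)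
      thus ?case using elim(1) by linarith
    qed
  qed
qed

context prob_space
begin

lemma prob_gt_eq_1_minus_le:
  fixes W :: "'a \<Rightarrow> real"
  assumes [measurable]: "W \<in> borel_measurable M"
  shows "prob {\<omega> \<in> space M. z < W \<omega>} = 1 - prob {\<omega> \<in> space M. W \<omega> \<le> z}"
proof -
  have "{\<omega> \<in> space M. z < W \<omega>} = space M - {\<omega> \<in> space M. W \<omega> \<le> z}" by auto
  thus ?thesis by (simp add: prob_compl)
qed

lemma indep_var_prob_conj:
  fixes U V :: "'a \<Rightarrow> real"
  assumes "indep_var borel U borel V" "A \<in> sets borel" "B \<in> sets borel"
  shows "prob {\<omega> \<in> space M. U \<omega> \<in> A \<and> V \<omega> \<in> B}
       = prob {\<omega> \<in> space M. U \<omega> \<in> A} * prob {\<omega> \<in> space M. V \<omega> \<in> B}"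
  using indep_varD[OF assms] by (simp add: vimage_def Int_def conj_commute)

lemma nn_integral_indep_var_mult:
  fixes U V :: "'a \<Rightarrow> real" and g1 g2 :: "real \<Rightarrow> real"
  assumes ind: "indep_var borel U borel V"
    and [measurable]: "g1 \<in> borel_measurable borel" "g2 \<in> borel_measurable borel"
  shows "(\<integral>\<^sup>+\<omega>. ennreal (g1 (U \<omega>)) * ennreal (g2 (V \<omega>)) \<partial>M)
       = (\<integral>\<^sup>+\<omega>. ennreal (g1 (U \<omega>)) \<partial>M) * (\<integral>\<^sup>+\<omega>. ennreal (g2 (V \<omega>)) \<partial>M)"
proof -
  have "indep_var borel ((\<lambda>u. ennreal (g1 u)) \<circ> U) borel ((\<lambda>u. ennreal (g2 u)) \<circ> V)"
    by (rule indep_var_compose[OF ind]) measurable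
  moreover have "case_bool borel borel = (\<lambda>_::bool. borel :: ennreal measure)"
    by (rule ext) (simp split: bool.split)
  ultimately have "indep_vars (\<lambda>_. borel) (case_bool ((\<lambda>u. ennreal (g1 u)) \<circ> U) ((\<lambda>u. ennreal (g2 u)) \<circ> V)) UNIV"
    unfolding indep_var_def by simp
  from indep_vars_nn_integral[OF _ this] show ?thesis
    by (simp add: UNIV_bool mult.commute o_def)
qed

lemma prob_prod_eq:
  fixes U V :: "'a \<Rightarrow> real"
  assumes DU: "distributed M lborel U fU" and DV: "distributed M lborel V fV"
    and ind: "indep_var borel U borel V"
  shows "prob {\<omega> \<in> space M. U \<omega> * V \<omega> = z} = 0"
proof -
  have "distr M borel U \<Otimes>\<^sub>M distr M borel V = distr M (borel \<Otimes>\<^sub>M borel) (\<lambda>\<omega>. (U \<omega>, V \<omega>))"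
    using indep_var_distribution_eq[THEN iffD1, OF ind] by blast
  moreover have "distr M lborel U = distr M borel U" "distr M lborel V = distr M borel V"
    and "distr M (lborel \<Otimes>\<^sub>M lborel) (\<lambda>\<omega>. (U \<omega>, V \<omega>)) = distr M (borel \<Otimes>\<^sub>M borel) (\<lambda>\<omega>. (U \<omega>, V \<omega>))"
    by (auto intro!: distr_cong sets_pair_measure_cong)
  ultimately have J: "distributed M (lborel \<Otimes>\<^sub>M lborel) (\<lambda>\<omega>. (U \<omega>, V \<omega>)) (\<lambda>(x, y). fU x * fV y)"
    by (intro distributed_joint_indep'[OF lborel.sigma_finite_measure_axioms
          lborel.sigma_finite_measure_axioms DU DV]) simp
  define S where "S = {p :: real \<times> real. fst p * snd p = z}"
  have S: "S \<in> null_sets (lborel \<Otimes>\<^sub>M lborel)" unfolding S_def by (rule hyperbola_null_sets)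
  have "emeasure M {\<omega> \<in> space M. U \<omega> * V \<omega> = z} = emeasure M ((\<lambda>\<omega>. (U \<omega>, V \<omega>)) -` S \<inter> space M)"
    by (auto simp: S_def intro!: arg_cong[where f = "emeasure M"])
  also have "\<dots> = (\<integral>\<^sup>+p. (case p of (x, y) \<Rightarrow> fU x * fV y) * indicator S p \<partial>(lborel \<Otimes>\<^sub>M lborel))"
    using S by (intro distributed_emeasure[OF J]) auto
  also have "\<dots> = 0" by (rule nn_integral_null_set[OF S])
  finally show ?thesis by (simp add: measure_def)
qed

lemma prob_prod_le_reflect:
  fixes U V :: "'a \<Rightarrow> real"
  assumes DU: "distributed M lborel U fU" and DV: "distributed M lborel V fV"
    and ind: "indep_var borel U borel V"
  shows "prob {\<omega> \<in> space M. U \<omega> * V \<omega> \<le> z} = 1 - prob {\<omega> \<in> space M. U \<omega> * - V \<omega> \<le> - z}"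
proof -
  have [measurable]: "U \<in> borel_measurable M" "V \<in> borel_measurable M"
    using indep_var_rv1[OF ind] indep_var_rv2[OF ind] by simp_all
  have "prob {\<omega> \<in> space M. U \<omega> * - V \<omega> \<le> - z}
      = prob ({\<omega> \<in> space M. z < U \<omega> * V \<omega>} \<union> {\<omega> \<in> space M. U \<omega> * V \<omega> = z})"
    by (rule arg_cong[where f = prob]) auto
  also have "\<dots> = prob {\<omega> \<in> space M. z < U \<omega> * V \<omega>}"
    using prob_prod_eq[OF DU DV ind, of z] by (subst finite_measure_Union) auto
  also have "\<dots> = 1 - prob {\<omega> \<in> space M. U \<omega> * V \<omega> \<le> z}"
    by (simp add: prob_gt_eq_1_minus_le)
  finally show ?thesis by simp
qed

lemma prob_prod_interval_pos:
  fixes U V :: "'a \<Rightarrow> real"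
  assumes ind: "indep_var borel U borel V"
    and U: "\<And>a b. 0 < a \<Longrightarrow> a < b \<Longrightarrow> 0 < prob {\<omega> \<in> space M. a < U \<omega> \<and> U \<omega> < b}"
    and V: "\<And>a b. 0 < a \<Longrightarrow> a < b \<Longrightarrow> 0 < prob {\<omega> \<in> space M. a < V \<omega> \<and> V \<omega> < b}"
    and z: "0 < z1" "z1 < z2"
  shows "0 < prob {\<omega> \<in> space M. z1 < U \<omega> * V \<omega> \<and> U \<omega> * V \<omega> \<le> z2}"
proof -
  have [measurable]: "U \<in> borel_measurable M" "V \<in> borel_measurable M"
    using indep_var_rv1[OF ind] indep_var_rv2[OF ind] by simp_all
  define r where "r = sqrt (z2 / z1)"
  have r: "r > 1" "z1 * r * r = z2"
    using z by (simp_all add: r_def real_less_rsqrt mult.assoc real_sqrt_mult_self)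
  \<comment> \<open>z1 < U < z1 r and 1 < V < r force z1 < U V < z2\<close>
  have "0 < prob {\<omega> \<in> space M. U \<omega> \<in> {z1<..<z1 * r}} * prob {\<omega> \<in> space M. V \<omega> \<in> {1<..<r}}"
    using U[of z1 "z1 * r"] V[of 1 r] z r by simp
  also have "\<dots> = prob {\<omega> \<in> space M. U \<omega> \<in> {z1<..<z1 * r} \<and> V \<omega> \<in> {1<..<r}}"
    by (rule indep_var_prob_conj[OF ind, symmetric]) auto
  also have "\<dots> \<le> prob {\<omega> \<in> space M. z1 < U \<omega> * V \<omega> \<and> U \<omega> * V \<omega> \<le> z2}"
  proof (rule finite_measure_mono)
    show "{\<omega> \<in> space M. U \<omega> \<in> {z1<..<z1 * r} \<and> V \<omega> \<in> {1<..<r}}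
        \<subseteq> {\<omega> \<in> space M. z1 < U \<omega> * V \<omega> \<and> U \<omega> * V \<omega> \<le> z2}"
    proof safe
      fix \<omega> assume \<omega>: "U \<omega> \<in> {z1<..<z1 * r}" "V \<omega> \<in> {1<..<r}"
      have "z1 * 1 < U \<omega> * V \<omega>" by (rule mult_strict_mono) (use z \<omega> in auto)
      moreover have "U \<omega> * V \<omega> < (z1 * r) * r" by (rule mult_strict_mono) (use z \<omega> in auto)
      ultimately show "z1 < U \<omega> * V \<omega>" "U \<omega> * V \<omega> \<le> z2" using r by auto
    qed
  qed measurable
  finally show ?thesis .
qed

lemma prob_prod_gt_ge:
  fixes U V :: "'a \<Rightarrow> real"
  assumes ind: "indep_var borel U borel V"
    and U: "exp_right_tail M U l1" and V: "exp_right_tail M V l2"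
    and s: "s > 2 * sqrt (l1 * l2)"
  shows "\<forall>\<^sub>F z in at_top. exp (- s * sqrt z) \<le> prob {\<omega> \<in> space M. z < U \<omega> * V \<omega>}"
proof -
  have [measurable]: "U \<in> borel_measurable M" "V \<in> borel_measurable M"
    using indep_var_rv1[OF ind] indep_var_rv2[OF ind] by simp_all
  have l: "l1 > 0" "l2 > 0" using U V by (simp_all add: exp_right_tail_def)
  define t where "t = s / (2 * sqrt (l1 * l2))"
  define a1 a2 where "a1 = l1 * t" and "a2 = l2 * t"
  have "t > 1" using s l by (simp add: t_def)
  hence a: "a1 > l1" "a2 > l2" "a1 > 0" "a2 > 0" using l by (simp_all add: a1_def a2_def)
  have "0 \<le> sqrt (l1 * l2)" using l by simp
  hence "0 \<le> s" using s by linarith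
  with l have s_eq: "s = 2 * sqrt (a1 * a2)"
    unfolding a1_def a2_def t_def by (rule two_sqrt_mult_rescaled[symmetric])
  \<comment> \<open>split the threshold as z = u v with a1 u = a2 v = s sqrt z / 2\<close>
  define u v where "u z = sqrt (a1 * a2) * sqrt z / a1" and "v z = sqrt (a1 * a2) * sqrt z / a2" for z
  have "filterlim u at_top at_top" "filterlim v at_top at_top"
    unfolding u_def v_def using a
    by (auto intro!: filterlim_tendsto_pos_mult_at_top[OF tendsto_const] sqrt_at_top
             simp: divide_inverse mult.commute[of _ "inverse _"])
  hence "\<forall>\<^sub>F z in at_top. exp (- a1 * u z) \<le> prob {\<omega> \<in> space M. u z < U \<omega>}"
    and "\<forall>\<^sub>F z in at_top. exp (- a2 * v z) \<le> prob {\<omega> \<in> space M. v z < V \<omega>}"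
    using U V a by (auto simp: exp_right_tail_def intro: eventually_compose_filterlim)
  moreover have "\<forall>\<^sub>F z in at_top. 0 \<le> (z::real)" by simp
  ultimately show ?thesis
  proof eventually_elim
    case (elim z)
    have "u z * v z = (sqrt (a1 * a2))\<^sup>2 * (sqrt z)\<^sup>2 / (a1 * a2)"
      by (simp add: u_def v_def power2_eq_square field_simps)
    hence uv: "0 \<le> u z" "0 \<le> v z" "u z * v z = z" using a elim(3) by (simp_all add: u_def v_def)
    have "exp (- s * sqrt z) = exp (- a1 * u z) * exp (- a2 * v z)"
      using a by (simp add: s_eq u_def v_def exp_add[symmetric] algebra_simps)
    also have "\<dots> \<le> prob {\<omega> \<in> space M. u z < U \<omega>} * prob {\<omega> \<in> space M. v z < V \<omega>}"
      using elim by (intro mult_mono) auto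
    also have "\<dots> = prob {\<omega> \<in> space M. U \<omega> \<in> {u z<..} \<and> V \<omega> \<in> {v z<..}}"
      using indep_var_prob_conj[OF ind, of "{u z<..}" "{v z<..}"] by simp
    also have "\<dots> \<le> prob {\<omega> \<in> space M. z < U \<omega> * V \<omega>}"
    proof (rule finite_measure_mono)
      show "{\<omega> \<in> space M. U \<omega> \<in> {u z<..} \<and> V \<omega> \<in> {v z<..}} \<subseteq> {\<omega> \<in> space M. z < U \<omega> * V \<omega>}"
      proof safe
        fix \<omega> assume "u z < U \<omega>" "v z < V \<omega>"
        hence "u z * v z < U \<omega> * V \<omega>" using uv by (intro mult_strict_mono) auto
        thus "z < U \<omega> * V \<omega>" using uv by simp
      qed
    qed measurable
    finally show ?case .
  qed
qed

lemma emeasure_pos_prod_gt_le_moments: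
  fixes U V :: "'a \<Rightarrow> real"
  assumes ind: "indep_var borel U borel V" and a: "0 \<le> a1" "0 \<le> a2"
  shows "emeasure M {\<omega> \<in> space M. 0 < U \<omega> \<and> 0 < V \<omega> \<and> z < U \<omega> * V \<omega>}
      \<le> ennreal (exp (- 2 * sqrt (a1 * a2) * sqrt z))
        * ((\<integral>\<^sup>+\<omega>. ennreal (exp (a1 * max (U \<omega>) 0)) \<partial>M) * (\<integral>\<^sup>+\<omega>. ennreal (exp (a2 * max (V \<omega>) 0)) \<partial>M))"
proof -
  have [measurable]: "U \<in> borel_measurable M" "V \<in> borel_measurable M"
    using indep_var_rv1[OF ind] indep_var_rv2[OF ind] by simp_all
  define E where "E = {\<omega> \<in> space M. 0 < U \<omega> \<and> 0 < V \<omega> \<and> z < U \<omega> * V \<omega>}"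
  define c where "c = 2 * sqrt (a1 * a2) * sqrt z"
  \<comment> \<open>Markov's inequality for exp (a1 U + a2 V), which dominates exp c on E by AM-GM\<close>
  have markov: "indicator E \<omega> \<le> ennreal (exp (- c))
      * (ennreal (exp (a1 * max (U \<omega>) 0)) * ennreal (exp (a2 * max (V \<omega>) 0)))" for \<omega>
  proof (cases "\<omega> \<in> E")
    case True
    hence UV: "0 < U \<omega>" "0 < V \<omega>" "z < U \<omega> * V \<omega>" by (auto simp: E_def)
    hence "sqrt z \<le> sqrt (U \<omega> * V \<omega>)" by simp
    hence "c \<le> 2 * sqrt (a1 * a2) * sqrt (U \<omega> * V \<omega>)" unfolding c_def using a by (intro mult_left_mono) auto
    also have "\<dots> \<le> a1 * max (U \<omega>) 0 + a2 * max (V \<omega>) 0"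
      using sqrt_mult_le_weighted_sum[of a1 a2 "U \<omega>" "V \<omega>"] a UV by simp
    finally have "1 \<le> exp (- c) * (exp (a1 * max (U \<omega>) 0) * exp (a2 * max (V \<omega>) 0))"
      by (simp add: exp_add[symmetric])
    thus ?thesis using True by (simp add: ennreal_mult[symmetric] ennreal_leI)
  qed simp
  have "emeasure M E = (\<integral>\<^sup>+\<omega>. indicator E \<omega> \<partial>M)" by (simp add: E_def)
  also have "\<dots> \<le> (\<integral>\<^sup>+\<omega>. ennreal (exp (- c))
      * (ennreal (exp (a1 * max (U \<omega>) 0)) * ennreal (exp (a2 * max (V \<omega>) 0))) \<partial>M)"
    by (intro nn_integral_mono markov)
  also have "\<dots> = ennreal (exp (- c)) * ((\<integral>\<^sup>+\<omega>. ennreal (exp (a1 * max (U \<omega>) 0)) \<partial>M)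
      * (\<integral>\<^sup>+\<omega>. ennreal (exp (a2 * max (V \<omega>) 0)) \<partial>M))"
    using nn_integral_indep_var_mult[OF ind, of "\<lambda>u. exp (a1 * max u 0)" "\<lambda>u. exp (a2 * max u 0)"]
    by (subst nn_integral_cmult) (simp_all add: borel_measurable_continuous_onI continuous_intros)
  finally show ?thesis by (simp add: E_def c_def)
qed

lemma prob_pos_prod_gt_le:
  fixes U V :: "'a \<Rightarrow> real"
  assumes ind: "indep_var borel U borel V"
    and U: "exp_right_tail M U l1" and V: "exp_right_tail M V l2"
    and s: "0 < s" "s < 2 * sqrt (l1 * l2)"
  shows "\<exists>C. \<forall>z. prob {\<omega> \<in> space M. 0 < U \<omega> \<and> 0 < V \<omega> \<and> z < U \<omega> * V \<omega>} \<le> C * exp (- s * sqrt z)"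
proof -
  have l: "l1 > 0" "l2 > 0" using U V by (simp_all add: exp_right_tail_def)
  define t where "t = s / (2 * sqrt (l1 * l2))"
  define a1 a2 where "a1 = l1 * t" and "a2 = l2 * t"
  have "0 < t" "t < 1" using s l by (simp_all add: t_def)
  hence a: "0 < a1" "a1 < l1" "0 < a2" "a2 < l2" using l by (simp_all add: a1_def a2_def)
  have s_eq: "s = 2 * sqrt (a1 * a2)"
    using l \<open>0 < s\<close> unfolding a1_def a2_def t_def by (intro two_sqrt_mult_rescaled[symmetric]) auto
  define I where "I = (\<integral>\<^sup>+\<omega>. ennreal (exp (a1 * max (U \<omega>) 0)) \<partial>M)
                    * (\<integral>\<^sup>+\<omega>. ennreal (exp (a2 * max (V \<omega>) 0)) \<partial>M)"
  have "I \<noteq> \<infinity>" using U V a by (simp add: exp_right_tail_def I_def ennreal_mult_eq_top_iff)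
  have "prob {\<omega> \<in> space M. 0 < U \<omega> \<and> 0 < V \<omega> \<and> z < U \<omega> * V \<omega>} \<le> enn2real I * exp (- s * sqrt z)" for z
  proof -
    have "emeasure M {\<omega> \<in> space M. 0 < U \<omega> \<and> 0 < V \<omega> \<and> z < U \<omega> * V \<omega>}
        \<le> ennreal (exp (- s * sqrt z)) * I"
      using emeasure_pos_prod_gt_le_moments[OF ind, of a1 a2 z] a by (simp add: s_eq I_def)
    also have "\<dots> = ennreal (enn2real I * exp (- s * sqrt z))"
      using \<open>I \<noteq> \<infinity>\<close> by (simp add: ennreal_mult ennreal_enn2real_if mult.commute)
    finally show ?thesis by (simp add: emeasure_eq_measure)
  qed
  thus ?thesis by blast
qed

lemma prob_prod_gt_le_sum:
  fixes U V :: "'a \<Rightarrow> real"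
  assumes [measurable]: "U \<in> borel_measurable M" "V \<in> borel_measurable M" and z: "0 \<le> z"
  shows "prob {\<omega> \<in> space M. z < U \<omega> * V \<omega>}
      \<le> prob {\<omega> \<in> space M. 0 < U \<omega> \<and> 0 < V \<omega> \<and> z < U \<omega> * V \<omega>}
        + prob {\<omega> \<in> space M. 0 < - U \<omega> \<and> 0 < - V \<omega> \<and> z < - U \<omega> * - V \<omega>}"
proof -
  have "{\<omega> \<in> space M. z < U \<omega> * V \<omega>}
      = {\<omega> \<in> space M. 0 < U \<omega> \<and> 0 < V \<omega> \<and> z < U \<omega> * V \<omega>}
        \<union> {\<omega> \<in> space M. 0 < - U \<omega> \<and> 0 < - V \<omega> \<and> z < - U \<omega> * - V \<omega>}"
    using z by (auto simp: zero_less_mult_iff dest: le_less_trans)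
  thus ?thesis by (simp add: measure_Un_le)
qed

lemma tendsto_ln_prob_prod_gt:
  fixes U V :: "'a \<Rightarrow> real"
  assumes ind: "indep_var borel U borel V"
    and U: "exp_right_tail M U l1" and U': "exp_right_tail M (\<lambda>\<omega>. - U \<omega>) k1"
    and V: "exp_right_tail M V l2" and V': "exp_right_tail M (\<lambda>\<omega>. - V \<omega>) k2"
  shows "((\<lambda>z. ln (prob {\<omega> \<in> space M. z < U \<omega> * V \<omega>}) / sqrt z)
           \<longlongrightarrow> - 2 * sqrt (min (l1 * l2) (k1 * k2))) at_top"
proof -
  have UV[measurable]: "U \<in> borel_measurable M" "V \<in> borel_measurable M"
    using indep_var_rv1[OF ind] indep_var_rv2[OF ind] by simp_all
  have ind': "indep_var borel (\<lambda>\<omega>. - U \<omega>) borel (\<lambda>\<omega>. - V \<omega>)"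
    using indep_var_compose[OF ind, of uminus borel uminus borel] by (simp add: o_def)
  have pos: "l1 * l2 > 0" "k1 * k2 > 0" using U U' V V' by (simp_all add: exp_right_tail_def)
  have r: "2 * sqrt (min (l1 * l2) (k1 * k2)) = min (2 * sqrt (l1 * l2)) (2 * sqrt (k1 * k2))"
    by (simp add: min_def)
  have "((\<lambda>z. ln (prob {\<omega> \<in> space M. z < U \<omega> * V \<omega>}) / sqrt z)
           \<longlongrightarrow> - min (2 * sqrt (l1 * l2)) (2 * sqrt (k1 * k2))) at_top"
  proof (rule tendsto_ln_div_of_exp_bounds[OF sqrt_at_top])
    show "0 < min (2 * sqrt (l1 * l2)) (2 * sqrt (k1 * k2))" using pos by simp
  next
    fix s assume "min (2 * sqrt (l1 * l2)) (2 * sqrt (k1 * k2)) < s"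
    thus "\<forall>\<^sub>F z in at_top. exp (- s * sqrt z) \<le> prob {\<omega> \<in> space M. z < U \<omega> * V \<omega>}"
      using prob_prod_gt_ge[OF ind U V, of s] prob_prod_gt_ge[OF ind' U' V', of s] by (auto simp: min_less_iff_disj)
  next
    fix s assume s: "0 < s" "s < min (2 * sqrt (l1 * l2)) (2 * sqrt (k1 * k2))"
    obtain C1 where C1: "\<And>z. prob {\<omega> \<in> space M. 0 < U \<omega> \<and> 0 < V \<omega> \<and> z < U \<omega> * V \<omega>}
        \<le> C1 * exp (- s * sqrt z)"
      using prob_pos_prod_gt_le[OF ind U V, of s] s by auto
    obtain C2 where C2: "\<And>z. prob {\<omega> \<in> space M. 0 < - U \<omega> \<and> 0 < - V \<omega> \<and> z < - U \<omega> * - V \<omega>}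
        \<le> C2 * exp (- s * sqrt z)"
      using prob_pos_prod_gt_le[OF ind' U' V', of s] s by auto
    have "\<forall>\<^sub>F z in at_top. prob {\<omega> \<in> space M. z < U \<omega> * V \<omega>} \<le> (C1 + C2) * exp (- s * sqrt z)"
      using eventually_ge_at_top[of 0]
    proof eventually_elim
      case (elim z)
      from prob_prod_gt_le_sum[OF UV elim] C1[of z] C2[of z] show ?case
        by (simp add: distrib_right)
    qed
    thus "\<exists>C. \<forall>\<^sub>F z in at_top. prob {\<omega> \<in> space M. z < U \<omega> * V \<omega>} \<le> C * exp (- s * sqrt z)" ..
  qed
  thus ?thesis by (simp add: r)
qed

end

section \<open>Quantiles\<close>

lemma quantile_eq:
  assumes "\<exists>!z. F z = p"
  shows "F (quantile F p) = p"
  unfolding quantile_def using assms by (rule theI')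

lemma eventually_ex1_preimage_at_left_1:
  fixes F :: "real \<Rightarrow> real"
  assumes cont: "\<And>z. isCont F z" and mono: "mono F" and lim: "(F \<longlongrightarrow> 1) at_top"
    and strict: "strict_mono_on {0<..} F" and le1: "\<And>z. F z \<le> 1"
  shows "\<forall>\<^sub>F p in at_left 1. \<exists>!z. F z = p"
proof -
  have "F 1 < F 2" using strict by (simp add: strict_mono_onD)
  hence F1: "F 1 < 1" using le1[of 2] by linarith
  have "\<exists>!z. F z = p" if p: "F 1 < p" "p < 1" for p
  proof (rule ex_ex1I)
    have "\<forall>\<^sub>F x in at_top. p < F x \<and> 1 \<le> x"
      using order_tendstoD(1)[OF lim p(2)] eventually_ge_at_top by (rule eventually_conj)
    then obtain T where T: "p < F T" "1 \<le> T" by (auto simp: eventually_at_top_linorder)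
    have "continuous_on {1..T} F" by (intro continuous_at_imp_continuous_on ballI cont)
    then obtain z where "F z = p" using IVT'[of F 1 p T] p T by auto
    thus "\<exists>z. F z = p" ..
  next
    fix z w assume zw: "F z = p" "F w = p"
    \<comment> \<open>both lie to the right of 1, where F is injective\<close>
    have "1 < z" "1 < w" using zw p mono by (auto simp: not_less dest: monoD[of F _ 1])
    thus "z = w" using strict_mono_on_eqD[OF strict] zw by force
  qed
  thus ?thesis using eventually_at_left_real[OF F1] by (rule eventually_mono[rotated]) auto
qed

lemma filterlim_quantile_at_left_1:
  fixes F :: "real \<Rightarrow> real"
  assumes mono: "mono F" and lt1: "\<And>z. F z < 1" and ex1: "\<forall>\<^sub>F p in at_left 1. \<exists>!z. F z = p"
  shows "filterlim (quantile F) at_top (at_left 1)"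
  unfolding filterlim_at_top
proof
  fix T :: real
  from eventually_at_left_real[OF lt1[of T]] ex1
  show "\<forall>\<^sub>F p in at_left 1. T \<le> quantile F p"
  proof eventually_elim
    case (elim p)
    show ?case
    proof (rule ccontr)
      assume "\<not> T \<le> quantile F p"
      hence "F (quantile F p) \<le> F T" using mono by (simp add: monoD)
      thus False using elim quantile_eq[of F p] by simp
    qed
  qed
qed

lemma asymp_equiv_of_tendsto_div_sqrt:
  fixes Q L :: "'b \<Rightarrow> real"
  assumes lim: "((\<lambda>x. L x / sqrt (Q x)) \<longlongrightarrow> - 2 * sqrt \<xi>) F" and "\<xi> > 0"
    and Q: "\<forall>\<^sub>F x in F. Q x > 0"
  shows "Q \<sim>[F] (\<lambda>x. (L x)\<^sup>2 / (4 * \<xi>))"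
proof (rule asymp_equivI')
  have "((\<lambda>x. 4 * \<xi> / (L x / sqrt (Q x))\<^sup>2) \<longlongrightarrow> 4 * \<xi> / (- 2 * sqrt \<xi>)\<^sup>2) F"
    using \<open>\<xi> > 0\<close> by (intro tendsto_intros lim) simp
  also have "4 * \<xi> / (- 2 * sqrt \<xi>)\<^sup>2 = 1" using \<open>\<xi> > 0\<close> by (simp add: power_mult_distrib)
  finally show "((\<lambda>x. Q x / ((L x)\<^sup>2 / (4 * \<xi>))) \<longlongrightarrow> 1) F"
    by (rule Lim_transform_eventually)
       (rule eventually_mono[OF Q], simp add: power_divide divide_divide_eq_right mult.commute)
qed

lemma quantile_asymp_equiv_at_left_1:
  fixes F :: "real \<Rightarrow> real"
  assumes cont: "\<And>z. isCont F z" and mono: "mono F" and lim: "(F \<longlongrightarrow> 1) at_top"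
    and strict: "strict_mono_on {0<..} F" and le1: "\<And>z. F z \<le> 1" and "\<xi> > 0"
    and tail: "((\<lambda>z. ln (1 - F z) / sqrt z) \<longlongrightarrow> - 2 * sqrt \<xi>) at_top"
  shows "(\<forall>\<^sub>F p in at_left 1. \<exists>!z. F z = p) \<and>
         quantile F \<sim>[at_left 1] (\<lambda>p. (ln (1 - p))\<^sup>2 / (4 * \<xi>))"
proof
  show ex1: "\<forall>\<^sub>F p in at_left 1. \<exists>!z. F z = p"
    by (rule eventually_ex1_preimage_at_left_1[OF cont mono lim strict le1])
  have "F z < 1" for z
  proof -
    have "F z \<le> F (max z 1)" using mono by (simp add: monoD)
    also have "\<dots> < F (max z 1 + 1)" using strict by (simp add: strict_mono_onD)
    also have "\<dots> \<le> 1" by (rule le1)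
    finally show ?thesis .
  qed
  hence Q: "filterlim (quantile F) at_top (at_left 1)"
    by (rule filterlim_quantile_at_left_1[OF mono _ ex1])
  have "((\<lambda>p. ln (1 - F (quantile F p)) / sqrt (quantile F p)) \<longlongrightarrow> - 2 * sqrt \<xi>) (at_left 1)"
    using filterlim_compose[OF tail Q] .
  hence "((\<lambda>p. ln (1 - p) / sqrt (quantile F p)) \<longlongrightarrow> - 2 * sqrt \<xi>) (at_left 1)"
    by (rule Lim_transform_eventually) (rule eventually_mono[OF ex1], simp add: quantile_eq)
  moreover have "\<forall>\<^sub>F p in at_left 1. quantile F p > 0"
    using Q by (simp add: filterlim_at_top_dense)
  ultimately show "quantile F \<sim>[at_left 1] (\<lambda>p. (ln (1 - p))\<^sup>2 / (4 * \<xi>))"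
    by (rule asymp_equiv_of_tendsto_div_sqrt[OF _ \<open>\<xi> > 0\<close>])
qed

lemma quantile_reflect:
  assumes refl: "\<And>z. F z = 1 - G (- z)" and ex1: "\<exists>!w. G w = 1 - p"
  shows "quantile F p = - quantile G (1 - p)"
proof -
  define w where "w = quantile G (1 - p)"
  have w: "G w = 1 - p" unfolding w_def by (rule quantile_eq[OF ex1])
  have "\<exists>!z. F z = p"
  proof (rule ex1I[of _ "- w"])
    show "F (- w) = p" using w refl[of "- w"] by simp
    fix z assume "F z = p"
    hence "G (- z) = 1 - p" using refl[of z] by simp
    hence "- z = w" using ex1 w by blast
    thus "z = - w" by simp
  qed
  moreover have "F (- w) = p" using w refl[of "- w"] by simp
  ultimately show ?thesis unfolding quantile_def w_def by (rule the1_equality)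
qed

lemma quantile_asymp_equiv_at_right_0_reflect:
  assumes refl: "\<And>z. F z = 1 - G (- z)" and ex1: "\<forall>\<^sub>F q in at_left 1. \<exists>!w. G w = q"
    and asymp: "quantile G \<sim>[at_left 1] (\<lambda>q. (ln (1 - q))\<^sup>2 / c)"
  shows "quantile F \<sim>[at_right 0] (\<lambda>p. - (ln p)\<^sup>2 / c)"
proof -
  have lim: "filterlim (\<lambda>p. 1 - p) (at_left 1) (at_right (0::real))" by real_asymp
  have "(\<lambda>p. - quantile G (1 - p)) \<sim>[at_right 0] (\<lambda>p. - ((ln (1 - (1 - p)))\<^sup>2 / c))"
    by (intro asymp_equiv_uminus asymp_equiv_compose'[OF asymp lim])
  moreover have "\<forall>\<^sub>F p in at_right 0. - quantile G (1 - p) = quantile F p"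
    using eventually_compose_filterlim[OF ex1 lim] by eventually_elim (simp add: quantile_reflect[of F G, OF refl])
  ultimately show ?thesis by (rule asymp_equiv_transfer) simp
qed

section \<open>Quantiles of products\<close>

context prob_space
begin

lemma quantile_prod_asymp_equiv_at_left_1:
  fixes U V :: "'a \<Rightarrow> real"
  assumes DU: "distributed M lborel U fU" and DV: "distributed M lborel V fV"
    and ind: "indep_var borel U borel V"
    and U: "exp_right_tail M U l1" "exp_right_tail M (\<lambda>\<omega>. - U \<omega>) k1"
    and V: "exp_right_tail M V l2" "exp_right_tail M (\<lambda>\<omega>. - V \<omega>) k2"
    and U_pos: "\<And>a b. 0 < a \<Longrightarrow> a < b \<Longrightarrow> 0 < prob {\<omega> \<in> space M. a < U \<omega> \<and> U \<omega> < b}"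
    and V_pos: "\<And>a b. 0 < a \<Longrightarrow> a < b \<Longrightarrow> 0 < prob {\<omega> \<in> space M. a < V \<omega> \<and> V \<omega> < b}"
  defines "F \<equiv> \<lambda>z. prob {\<omega> \<in> space M. U \<omega> * V \<omega> \<le> z}"
  shows "(\<forall>\<^sub>F p in at_left 1. \<exists>!z. F z = p) \<and>
         quantile F \<sim>[at_left 1] (\<lambda>p. (ln (1 - p))\<^sup>2 / (4 * min (l1 * l2) (k1 * k2)))"
proof (rule quantile_asymp_equiv_at_left_1)
  have [measurable]: "U \<in> borel_measurable M" "V \<in> borel_measurable M"
    using indep_var_rv1[OF ind] indep_var_rv2[OF ind] by simp_all
  define N where "N = distr M borel (\<lambda>\<omega>. U \<omega> * V \<omega>)"
  interpret N: real_distribution N unfolding N_def by (intro real_distribution_distr) measurable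
  have N_eq: "measure N A = prob {\<omega> \<in> space M. U \<omega> * V \<omega> \<in> A}" if "A \<in> sets borel" for A
    using that unfolding N_def by (subst measure_distr) (auto simp: vimage_def Int_def conj_commute)
  have cdf: "cdf N = F" by (auto simp: cdf_def N_eq F_def)
  show "isCont F z" for z
    using N_eq[of "{z}"] prob_prod_eq[OF DU DV ind, of z] N.isCont_cdf[of z] by (simp add: cdf)
  show "mono F" unfolding cdf[symmetric] by (intro monoI N.cdf_nondecreasing)
  show "(F \<longlongrightarrow> 1) at_top" unfolding cdf[symmetric] by (rule N.cdf_lim_at_top_prob)
  show "F z \<le> 1" for z by (simp add: F_def)
  show "strict_mono_on {0<..} F"
  proof (rule strict_mono_onI)
    fix z w :: real assume "z \<in> {0<..}" "z < w"
    hence "0 < measure N {z<..w}"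
      using prob_prod_interval_pos[OF ind U_pos V_pos, of z w] by (simp add: N_eq)
    thus "F z < F w" using N.cdf_diff_eq[OF \<open>z < w\<close>] by (simp add: cdf)
  qed
  show "min (l1 * l2) (k1 * k2) > 0" using U V by (simp add: exp_right_tail_def)
  have "1 - F z = prob {\<omega> \<in> space M. z < U \<omega> * V \<omega>}" for z
    by (simp add: F_def prob_gt_eq_1_minus_le)
  thus "((\<lambda>z. ln (1 - F z) / sqrt z) \<longlongrightarrow> - 2 * sqrt (min (l1 * l2) (k1 * k2))) at_top"
    using tendsto_ln_prob_prod_gt[OF ind U(1) U(2) V(1) V(2)] by simp
qed

lemma vg_prod_quantile_asymp_equiv_at_left_1:
  fixes X Y :: "'a \<Rightarrow> real"
  assumes DX: "distributed M lborel X (\<lambda>x. ennreal (vg_pdf m \<alpha>\<^sub>1 \<beta>\<^sub>1 x))"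
    and DY: "distributed M lborel Y (\<lambda>y. ennreal (vg_pdf n \<alpha>\<^sub>2 \<beta>\<^sub>2 y))"
    and X: "m > -1/2" "\<alpha>\<^sub>1 > 0" "\<bar>\<beta>\<^sub>1\<bar> < \<alpha>\<^sub>1"
    and Y: "n > -1/2" "\<alpha>\<^sub>2 > 0" "\<bar>\<beta>\<^sub>2\<bar> < \<alpha>\<^sub>2"
    and ind: "indep_var borel X borel Y"
  defines "F \<equiv> \<lambda>z. prob {\<omega> \<in> space M. X \<omega> * Y \<omega> \<le> z}"
  shows "(\<forall>\<^sub>F p in at_left 1. \<exists>!z. F z = p) \<and> quantile F \<sim>[at_left 1]
      (\<lambda>p. (ln (1 - p))\<^sup>2 / (4 * min ((\<alpha>\<^sub>1 - \<beta>\<^sub>1) * (\<alpha>\<^sub>2 - \<beta>\<^sub>2)) ((\<alpha>\<^sub>1 + \<beta>\<^sub>1) * (\<alpha>\<^sub>2 + \<beta>\<^sub>2))))"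
proof -
  have "\<bar>- \<beta>\<^sub>1\<bar> < \<alpha>\<^sub>1" "\<bar>- \<beta>\<^sub>2\<bar> < \<alpha>\<^sub>2" using X Y by simp_all
  from vg_exp_right_tail[OF distributed_vg_uminus[OF DX] X(1,2) this(1)]
       vg_exp_right_tail[OF distributed_vg_uminus[OF DY] Y(1,2) this(2)]
  have "exp_right_tail M (\<lambda>\<omega>. - X \<omega>) (\<alpha>\<^sub>1 + \<beta>\<^sub>1)" "exp_right_tail M (\<lambda>\<omega>. - Y \<omega>) (\<alpha>\<^sub>2 + \<beta>\<^sub>2)"
    by simp_all
  from quantile_prod_asymp_equiv_at_left_1[OF DX DY ind vg_exp_right_tail[OF DX X] this(1)
      vg_exp_right_tail[OF DY Y] this(2) vg_prob_interval_pos[OF DX X] vg_prob_interval_pos[OF DY Y]]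
  show ?thesis unfolding F_def .
qed

end

theorem mainTheorem11:
  fixes M :: "'a measure" and X Y :: "'a \<Rightarrow> real"
    and m n \<alpha>\<^sub>1 \<alpha>\<^sub>2 \<beta>\<^sub>1 \<beta>\<^sub>2 :: real
  assumes "prob_space M"
    and "m > -1/2" "n > -1/2" "\<alpha>\<^sub>1 > 0" "\<alpha>\<^sub>2 > 0"
    and "\<bar>\<beta>\<^sub>1\<bar> < \<alpha>\<^sub>1" "\<bar>\<beta>\<^sub>2\<bar> < \<alpha>\<^sub>2"
    and "distributed M lborel X (\<lambda>x. ennreal (vg_pdf m \<alpha>\<^sub>1 \<beta>\<^sub>1 x))"
    and "distributed M lborel Y (\<lambda>y. ennreal (vg_pdf n \<alpha>\<^sub>2 \<beta>\<^sub>2 y))"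
    and "prob_space.indep_var M borel X borel Y"
  defines "Q \<equiv> quantile (\<lambda>z. measure M {\<omega> \<in> space M. X \<omega> * Y \<omega> \<le> z})"
    and "\<xi>\<^sub>1 \<equiv> min ((\<alpha>\<^sub>1 - \<beta>\<^sub>1) * (\<alpha>\<^sub>2 - \<beta>\<^sub>2)) ((\<alpha>\<^sub>1 + \<beta>\<^sub>1) * (\<alpha>\<^sub>2 + \<beta>\<^sub>2))"
    and "\<xi>\<^sub>2 \<equiv> min ((\<alpha>\<^sub>1 - \<beta>\<^sub>1) * (\<alpha>\<^sub>2 + \<beta>\<^sub>2)) ((\<alpha>\<^sub>1 + \<beta>\<^sub>1) * (\<alpha>\<^sub>2 - \<beta>\<^sub>2))"
  shows "Q \<sim>[at_left 1] (\<lambda>p. (ln (1 - p))\<^sup>2 / (4 * \<xi>\<^sub>1)) \<and>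
         Q \<sim>[at_right 0] (\<lambda>p. - (ln p)\<^sup>2 / (4 * \<xi>\<^sub>2))"
proof -
  interpret prob_space M by fact
  note DX = assms(8) and DY = assms(9) and ind = assms(10)
  have DY': "distributed M lborel (\<lambda>\<omega>. - Y \<omega>) (\<lambda>y. ennreal (vg_pdf n \<alpha>\<^sub>2 (- \<beta>\<^sub>2) y))"
    by (rule distributed_vg_uminus[OF DY])
  have ind': "indep_var borel X borel (\<lambda>\<omega>. - Y \<omega>)"
    using indep_var_compose[OF ind, of id borel uminus borel] by (simp add: o_def)
  have "\<bar>- \<beta>\<^sub>2\<bar> < \<alpha>\<^sub>2" using assms(7) by simp
  note upper = vg_prod_quantile_asymp_equiv_at_left_1[OF DX DY assms(2,4,6,3,5,7) ind]
   and lower = vg_prod_quantile_asymp_equiv_at_left_1[OF DX DY' assms(2,4,6,3,5) this ind']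
  have "Q \<sim>[at_right 0] (\<lambda>p. - (ln p)\<^sup>2 / (4 * \<xi>\<^sub>2))"
    unfolding Q_def
    by (rule quantile_asymp_equiv_at_right_0_reflect[where G = "\<lambda>z. prob {\<omega> \<in> space M. X \<omega> * - Y \<omega> \<le> z}",
          OF prob_prod_le_reflect[OF DX DY ind]])
       (use lower in \<open>simp_all add: \<xi>\<^sub>2_def\<close>)
  with upper show ?thesis by (simp add: Q_def \<xi>\<^sub>1_def)
qed

end
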